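(* Suppose $p\in\mathbb{C}[z_1,z_2]$ is semi-stable. Then all common zeros of $p$ and $\tilde p$ in $\mathbb{C}_\infty\times\mathbb{C}_\infty$ lie in $(\mathbb{D}\times\mathbb{D}^{-1})\cup\mathbb{T}^2\cup(\mathbb{D}^{-1}\times\mathbb{D})$.
   Context: $\mathbb{D}$ is the open unit disk, $\mathbb{T}$ the unit circle, $\mathbb{C}_\infty=\mathbb{C}\cup\{\infty\}$, $\mathbb{D}^{-1}=\{z\in\mathbb{C}:|z|>1\}\cup\{\infty\}$. For $p$ of bidegree $(n,m)$, $\tilde p(z)=z_1^nz_2^m\overline{p(1/\bar z_1,1/\bar z_2)}$; $p$ is semi-stable if it has no zeros in $\mathbb{D}^2$ and $p,\tilde p$ have no common factor. Zeros at infinity for a polynomial $f$ of bidegree $(n,m)$: $f(a,\infty)=0$ means $z_2^mf(a,1/z_2)$ vanishes at $z_2=0$; $f(\infty,b)=0$ means $z_1^nf(1/z_1,b)$ vanishes at $z_1=0$; $f(\infty,\infty)=0$ means $z_1^nz_2^mf(1/z_1,1/z_2)$ vanishes at $(0,0)$. *)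

theory Defs
  imports "HOL-Analysis.Analysis" "HOL-Computational_Algebra.Polynomial"
begin

text \<open>A polynomial in \<open>\<complex>[z1,z2]\<close> is represented as an element of \<open>(\<complex>[z1])[z2]\<close>:
  the outer variable is z2, the coefficients are polynomials in z1.\<close>

type_synonym bipoly = "complex poly poly"

definition bcoeff :: "bipoly \<Rightarrow> nat \<Rightarrow> nat \<Rightarrow> complex" where
  "bcoeff p i j = coeff (coeff p j) i"

definition eval2 :: "bipoly \<Rightarrow> complex \<Rightarrow> complex \<Rightarrow> complex" where
  "eval2 p a b = poly (map_poly (\<lambda>c. poly c a) p) b"

definition deg1 :: "bipoly \<Rightarrow> nat" where
  "deg1 p = (MAX j\<in>{..degree p}. degree (coeff p j))"

definition deg2 :: "bipoly \<Rightarrow> nat" where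
  "deg2 p = degree p"

text \<open>Reflection w.r.t. bidegree (n,m): \<open>z1^n z2^m conj(p(1/conj z1, 1/conj z2))\<close>.\<close>
definition refl2 :: "nat \<Rightarrow> nat \<Rightarrow> bipoly \<Rightarrow> bipoly" where
  "refl2 n m p = (\<Sum>i\<le>n. \<Sum>j\<le>m. monom (monom (cnj (bcoeff p (n - i) (m - j))) i) j)"

definition ptilde :: "bipoly \<Rightarrow> bipoly" where
  "ptilde p = refl2 (deg1 p) (deg2 p) p"

text \<open>Points of the Riemann sphere: \<open>None\<close> is \<open>\<infinity>\<close>.\<close>
type_synonym ext_complex = "complex option"

text \<open>Vanishing of f, regarded as of bidegree (n,m), at a point of \<open>\<complex>\<^sub>\<infinity> \<times> \<complex>\<^sub>\<infinity>\<close>.\<close>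
fun vanishes_at :: "nat \<Rightarrow> nat \<Rightarrow> bipoly \<Rightarrow> ext_complex \<Rightarrow> ext_complex \<Rightarrow> bool" where
  "vanishes_at n m f (Some a) (Some b) = (eval2 f a b = 0)"
| "vanishes_at n m f (Some a) None = (poly (coeff f m) a = 0)"
  \<comment> \<open>\<open>z2^m f(a,1/z2)\<close> at \<open>z2 = 0\<close>\<close>
| "vanishes_at n m f None (Some b) = ((\<Sum>j\<le>m. bcoeff f n j * b ^ j) = 0)"
  \<comment> \<open>\<open>z1^n f(1/z1,b)\<close> at \<open>z1 = 0\<close>\<close>
| "vanishes_at n m f None None = (bcoeff f n m = 0)"

definition in_disk :: "ext_complex \<Rightarrow> bool" where
  "in_disk z = (case z of Some a \<Rightarrow> norm a < 1 | None \<Rightarrow> False)"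

definition in_ext_disk :: "ext_complex \<Rightarrow> bool" where
  "in_ext_disk z = (case z of Some a \<Rightarrow> norm a > 1 | None \<Rightarrow> True)"

definition in_circle :: "ext_complex \<Rightarrow> bool" where
  "in_circle z = (case z of Some a \<Rightarrow> norm a = 1 | None \<Rightarrow> False)"

definition semi_stable :: "bipoly \<Rightarrow> bool" where
  "semi_stable p \<longleftrightarrow>
     (\<forall>a b. norm a < 1 \<longrightarrow> norm b < 1 \<longrightarrow> eval2 p a b \<noteq> 0) \<and>
     (\<forall>d. d dvd p \<longrightarrow> d dvd ptilde p \<longrightarrow> is_unit d)"

end

theory Submission
  imports Defs "HOL-Complex_Analysis.Complex_Analysis"
begin

text \<open>In homogeneous coordinates one sees that \<open>p\<^sup>~\<close> vanishes at \<open>(z, w)\<close> iff \<open>p\<close> vanishes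
  at the reflected point \<open>(1/z\<^sup>*, 1/w\<^sup>*)\<close> (with \<open>0\<close> and \<open>\<infinity>\<close> exchanged), and this reflection
  swaps \<open>\<bbbD>\<close> and \<open>\<bbbD>\<^sup>-\<^sup>1\<close> and fixes \<open>\<bbbT>\<close>. So it suffices to show that \<open>p\<close> has no zeros in
  the closed bidisk off \<open>\<bbbT>\<^sup>2\<close>. Inside \<open>\<bbbD>\<^sup>2\<close> this is the hypothesis. If \<open>p(z\<^sub>0, w\<^sub>0) = 0\<close>
  with \<open>|z\<^sub>0| = 1\<close> and \<open>|w\<^sub>0| < 1\<close>, then by Hurwitz's theorem, applied to the zero-free slices
  \<open>p(r z\<^sub>0, \<cdot>)\<close> as \<open>r \<rightarrow> 1\<^sup>-\<close>, the slice \<open>p(z\<^sub>0, \<cdot>)\<close> vanishes identically. As \<open>z\<^sub>0\<close> is fixed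
  by the reflection, so does \<open>p\<^sup>~(z\<^sub>0, \<cdot>)\<close>, and \<open>z\<^sub>1 - z\<^sub>0\<close> is a common factor of \<open>p\<close> and
  \<open>p\<^sup>~\<close>. The case \<open>|z\<^sub>0| < 1 = |w\<^sub>0|\<close> is symmetric.\<close>

lemma poly_altdef_le:
  fixes q :: "'a::comm_semiring_1 poly"
  assumes "degree q \<le> N"
  shows "poly q x = (\<Sum>i\<le>N. coeff q i * x ^ i)"
proof -
  have "poly q x = (\<Sum>i\<le>degree q. coeff q i * x ^ i)" by (rule poly_altdef)
  also have "\<dots> = (\<Sum>i\<le>N. coeff q i * x ^ i)"
    by (rule sum.mono_neutral_left) (use assms in \<open>auto simp: coeff_eq_0\<close>)
  finally show ?thesis .
qed

lemma poly_eq_0_if_zero_on_open: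
  fixes q :: "'a::{real_normed_field, perfect_space} poly"
  assumes "open S" "S \<noteq> {}" "\<And>x. x \<in> S \<Longrightarrow> poly q x = 0"
  shows "q = 0"
proof (rule ccontr)
  assume "q \<noteq> 0"
  then have "finite {x. poly q x = 0}" by (rule poly_roots_finite)
  moreover have "S \<subseteq> {x. poly q x = 0}" using assms(3) by auto
  ultimately have "finite S" by (rule finite_subset[rotated])
  then show False using finite_imp_not_open assms(1,2) by blast
qed

lemma sum_atMost_rev: "(\<Sum>i\<le>(n::nat). g i) = (\<Sum>i\<le>n. g (n - i))"
  by (rule sum.reindex_bij_witness[where i="\<lambda>i. n - i" and j="\<lambda>i. n - i"]) auto

lemma sum_zero_power_diff: "(\<Sum>j\<le>m. g j * (0::'a::comm_semiring_1) ^ (m - j)) = g m"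
proof -
  have "(\<Sum>j\<le>m. g j * (0::'a) ^ (m - j)) = (\<Sum>j\<le>m. if j = m then g j else 0)"
    by (intro sum.cong refl) (auto simp: power_0_left)
  then show ?thesis by simp
qed

lemma eval2_altdef: "eval2 f a b = (\<Sum>j\<le>degree f. poly (coeff f j) a * b ^ j)"
proof -
  have "eval2 f a b = (\<Sum>j\<le>degree f. coeff (map_poly (\<lambda>c. poly c a) f) j * b ^ j)"
    unfolding eval2_def by (rule poly_altdef_le) (rule map_poly_degree_leq)
  then show ?thesis by (simp add: coeff_map_poly)
qed

lemma eval2_eq_poly_poly_const: "eval2 f a b = poly (poly f [:b:]) a"
proof -
  have "poly f [:b:] = (\<Sum>j\<le>degree f. coeff f j * [:b:] ^ j)" by (rule poly_altdef)
  then show ?thesis by (simp add: eval2_altdef poly_sum)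
qed

lemma continuous_on_eval2 [continuous_intros]:
  "continuous_on S a \<Longrightarrow> continuous_on S b \<Longrightarrow> continuous_on S (\<lambda>x. eval2 f (a x) (b x))"
  unfolding eval2_altdef by (intro continuous_intros)

lemma holomorphic_on_eval2_left: "(\<lambda>a. eval2 f a b) holomorphic_on S"
  unfolding eval2_altdef by (intro holomorphic_intros)

lemma holomorphic_on_eval2_right: "(\<lambda>b. eval2 f a b) holomorphic_on S"
  unfolding eval2_def by (intro holomorphic_intros)

definition bidegree_le :: "nat \<Rightarrow> nat \<Rightarrow> bipoly \<Rightarrow> bool" where
  "bidegree_le n m f \<longleftrightarrow> (\<forall>i j. (i > n \<or> j > m) \<longrightarrow> bcoeff f i j = 0)"

lemma bidegree_le_deg: "bidegree_le (deg1 p) (deg2 p) p"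
  unfolding bidegree_le_def
proof (intro allI impI)
  fix i j assume ij: "deg1 p < i \<or> deg2 p < j"
  show "bcoeff p i j = 0"
  proof (cases "j \<le> degree p")
    case True
    then have "degree (coeff p j) \<le> deg1 p" unfolding deg1_def by (intro Max_ge) auto
    with ij True show ?thesis by (auto simp: bcoeff_def deg2_def coeff_eq_0)
  qed (simp add: bcoeff_def coeff_eq_0)
qed

lemma bcoeff_refl2:
  "bcoeff (refl2 n m f) i j = (if i \<le> n \<and> j \<le> m then cnj (bcoeff f (n - i) (m - j)) else 0)"
  by (simp add: refl2_def bcoeff_def coeff_sum coeff_monom if_distrib[where f="\<lambda>x. coeff x i"]
        sum.delta cong: if_cong) (auto intro!: sum.neutral)

lemma bidegree_le_refl2: "bidegree_le n m (refl2 n m f)"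
  by (auto simp: bidegree_le_def bcoeff_refl2)

lemma eval2_bidegree_le:
  assumes "bidegree_le n m f"
  shows "eval2 f a b = (\<Sum>i\<le>n. \<Sum>j\<le>m. bcoeff f i j * a ^ i * b ^ j)"
proof -
  have "degree f \<le> m"
    by (rule degree_le) (use assms in \<open>auto simp: bidegree_le_def bcoeff_def poly_eq_iff\<close>)
  then have deg_f: "degree (map_poly (\<lambda>c. poly c a) f) \<le> m"
    using map_poly_degree_leq le_trans by blast
  have deg_coeff: "degree (coeff f j) \<le> n" for j
    by (rule degree_le) (use assms in \<open>auto simp: bidegree_le_def bcoeff_def\<close>)
  have "eval2 f a b = (\<Sum>j\<le>m. coeff (map_poly (\<lambda>c. poly c a) f) j * b ^ j)"
    unfolding eval2_def using deg_f by (rule poly_altdef_le)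
  also have "\<dots> = (\<Sum>j\<le>m. (\<Sum>i\<le>n. bcoeff f i j * a ^ i) * b ^ j)"
    by (simp add: coeff_map_poly poly_altdef_le[OF deg_coeff] bcoeff_def)
  also have "\<dots> = (\<Sum>i\<le>n. \<Sum>j\<le>m. bcoeff f i j * a ^ i * b ^ j)"
    by (simp add: sum_distrib_right sum.swap[of _ "{..n}"])
  finally show ?thesis .
qed

subsection \<open>Homogeneous coordinates\<close>

text \<open>A pair \<open>(s, a) \<noteq> (0, 0)\<close> stands for the point \<open>a / s\<close> of \<open>\<complex>\<^sub>\<infinity>\<close>.\<close>
definition homog2 :: "bipoly \<Rightarrow> nat \<Rightarrow> nat \<Rightarrow> complex \<times> complex \<Rightarrow> complex \<times> complex \<Rightarrow> complex" where
  "homog2 f n m P Q =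
     (\<Sum>i\<le>n. \<Sum>j\<le>m. bcoeff f i j * snd P ^ i * fst P ^ (n - i) * snd Q ^ j * fst Q ^ (m - j))"

lemma homog2_affine:
  assumes "bidegree_le n m f"
  shows "homog2 f n m (1, a) (1, b) = eval2 f a b"
  by (simp add: homog2_def eval2_bidegree_le[OF assms])

lemma homog2_scale:
  "homog2 f n m (c * s, c * a) (d * t, d * b) = c ^ n * d ^ m * homog2 f n m (s, a) (t, b)"
proof -
  have power_split: "x ^ k = x ^ i * x ^ (k - i)" if "i \<le> k" for x :: complex and i k
    using that by (simp flip: power_add)
  have "bcoeff f i j * (c * a) ^ i * (c * s) ^ (n - i) * (d * b) ^ j * (d * t) ^ (m - j) =
        c ^ n * d ^ m * (bcoeff f i j * a ^ i * s ^ (n - i) * b ^ j * t ^ (m - j))"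
    if "i \<le> n" "j \<le> m" for i j
    using power_split[OF that(1), of c] power_split[OF that(2), of d]
    by (simp add: power_mult_distrib mult_ac)
  then show ?thesis
    unfolding homog2_def sum_distrib_left by (intro sum.cong refl) auto
qed

lemma homog2_refl2:
  "homog2 (refl2 n m f) n m (s, a) (t, b) = cnj (homog2 f n m (cnj a, cnj s) (cnj b, cnj t))"
proof -
  have "homog2 f n m (cnj a, cnj s) (cnj b, cnj t) =
     (\<Sum>i\<le>n. \<Sum>j\<le>m. bcoeff f (n - i) (m - j) * cnj s ^ (n - i) * cnj a ^ (n - (n - i))
                      * cnj t ^ (m - j) * cnj b ^ (m - (m - j)))"
    unfolding homog2_def fst_conv snd_conv
    by (subst sum_atMost_rev) (intro sum.cong refl sum_atMost_rev)
  also have "\<dots> = (\<Sum>i\<le>n. \<Sum>j\<le>m. bcoeff f (n - i) (m - j) * cnj s ^ (n - i) * cnj a ^ i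
                      * cnj t ^ (m - j) * cnj b ^ j)"
    by (intro sum.cong refl) auto
  also have "cnj \<dots> = homog2 (refl2 n m f) n m (s, a) (t, b)"
    unfolding homog2_def fst_conv snd_conv by (simp add: bcoeff_refl2 mult_ac)
  finally show ?thesis by simp
qed

fun hcoords :: "ext_complex \<Rightarrow> complex \<times> complex" where
  "hcoords (Some a) = (1, a)"
| "hcoords None = (0, 1)"

lemma homog2_infinity_right: "homog2 f n m (s, a) (0, 1) = (\<Sum>i\<le>n. bcoeff f i m * a ^ i * s ^ (n - i))"
  using sum_zero_power_diff[of "\<lambda>j. bcoeff f _ j * a ^ _ * s ^ (n - _)" m]
  by (simp add: homog2_def mult.assoc)

lemma homog2_infinity_left: "homog2 f n m (0, 1) (t, b) = (\<Sum>j\<le>m. bcoeff f n j * b ^ j * t ^ (m - j))"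
proof -
  have "homog2 f n m (0, 1) (t, b) =
      (\<Sum>i\<le>n. (\<Sum>j\<le>m. bcoeff f i j * b ^ j * t ^ (m - j)) * 0 ^ (n - i))"
    unfolding homog2_def fst_conv snd_conv sum_distrib_right by (intro sum.cong refl) (simp add: mult_ac)
  then show ?thesis by (simp add: sum_zero_power_diff)
qed

lemma vanishes_at_iff_homog2:
  assumes "bidegree_le n m f"
  shows "vanishes_at n m f z w \<longleftrightarrow> homog2 f n m (hcoords z) (hcoords w) = 0"
proof (cases z; cases w)
  fix a assume zw: "z = Some a" "w = None"
  have "degree (coeff f m) \<le> n"
    by (rule degree_le) (use assms in \<open>auto simp: bidegree_le_def bcoeff_def\<close>)
  then have "poly (coeff f m) a = (\<Sum>i\<le>n. bcoeff f i m * a ^ i)"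
    by (simp add: poly_altdef_le bcoeff_def)
  then show ?thesis using zw by (simp add: homog2_infinity_right)
qed (use homog2_affine[OF assms] in \<open>simp_all add: homog2_infinity_left sum_zero_power_diff\<close>)

subsection \<open>Reflection in the unit circle\<close>

fun circle_reflect :: "ext_complex \<Rightarrow> ext_complex" where
  "circle_reflect None = Some 0"
| "circle_reflect (Some a) = (if a = 0 then None else Some (1 / cnj a))"

lemma hcoords_circle_reflect:
  "\<exists>c. c \<noteq> 0 \<and> (cnj (snd (hcoords z)), cnj (fst (hcoords z))) =
     (c * fst (hcoords (circle_reflect z)), c * snd (hcoords (circle_reflect z)))"
proof (cases z)
  case (Some a)
  then show ?thesis by (cases "a = 0") (auto intro!: exI[of _ "cnj a"])
qed (auto intro!: exI[of _ 1])

lemma vanishes_at_refl2_iff: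
  assumes "bidegree_le n m f"
  shows "vanishes_at n m (refl2 n m f) z w \<longleftrightarrow>
         vanishes_at n m f (circle_reflect z) (circle_reflect w)"
proof -
  obtain c where c: "c \<noteq> 0" and hz: "(cnj (snd (hcoords z)), cnj (fst (hcoords z))) =
     (c * fst (hcoords (circle_reflect z)), c * snd (hcoords (circle_reflect z)))"
    using hcoords_circle_reflect by blast
  obtain d where d: "d \<noteq> 0" and hw: "(cnj (snd (hcoords w)), cnj (fst (hcoords w))) =
     (d * fst (hcoords (circle_reflect w)), d * snd (hcoords (circle_reflect w)))"
    using hcoords_circle_reflect by blast
  have "vanishes_at n m (refl2 n m f) z w \<longleftrightarrow>
        homog2 f n m (cnj (snd (hcoords z)), cnj (fst (hcoords z)))
                     (cnj (snd (hcoords w)), cnj (fst (hcoords w))) = 0"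
    using vanishes_at_iff_homog2[OF bidegree_le_refl2]
    by (metis homog2_refl2 complex_cnj_zero_iff prod.collapse)
  also have "\<dots> \<longleftrightarrow> homog2 f n m (hcoords (circle_reflect z)) (hcoords (circle_reflect w)) = 0"
    unfolding hz hw homog2_scale using c d by simp
  also have "\<dots> \<longleftrightarrow> vanishes_at n m f (circle_reflect z) (circle_reflect w)"
    using vanishes_at_iff_homog2[OF assms] by simp
  finally show ?thesis .
qed

lemma vanishes_at_ptilde_iff:
  "vanishes_at (deg1 p) (deg2 p) (ptilde p) z w \<longleftrightarrow>
   vanishes_at (deg1 p) (deg2 p) p (circle_reflect z) (circle_reflect w)"
  unfolding ptilde_def by (rule vanishes_at_refl2_iff[OF bidegree_le_deg])

lemma eval2_ptilde_eq_0_iff: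
  assumes "a \<noteq> 0" "b \<noteq> 0"
  shows "eval2 (ptilde p) a b = 0 \<longleftrightarrow> eval2 p (1 / cnj a) (1 / cnj b) = 0"
  using vanishes_at_ptilde_iff[of p "Some a" "Some b"] assms by simp

lemma in_ext_disk_circle_reflect: "in_ext_disk (circle_reflect z) \<longleftrightarrow> in_disk z"
  and in_circle_circle_reflect: "in_circle (circle_reflect z) \<longleftrightarrow> in_circle z"
  by (cases z; auto simp: in_disk_def in_ext_disk_def in_circle_def norm_divide
        divide_less_eq less_divide_eq)+

lemma in_disk_not_in_ext_disk: "\<not> (in_disk z \<and> in_ext_disk z)"
  by (cases z) (auto simp: in_disk_def in_ext_disk_def)

lemma in_circle_iff: "in_circle z \<longleftrightarrow> \<not> in_disk z \<and> \<not> in_ext_disk z"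
  by (cases z) (auto simp: in_disk_def in_ext_disk_def in_circle_def)

subsection \<open>Zeros on the boundary of the bidisk\<close>

lemma uniform_limit_slices:
  fixes f :: "'a::heine_borel \<Rightarrow> 'b::metric_space \<Rightarrow> 'c::metric_space"
  assumes cont: "continuous_on UNIV (\<lambda>z. f (fst z) (snd z))" and K: "compact K"
    and xs: "xs \<longlonglongrightarrow> x0"
  shows "uniform_limit K (\<lambda>n w. f (xs n) w) (\<lambda>w. f x0 w) sequentially"
proof (rule uniform_limitI)
  fix e :: real assume e: "e > 0"
  define A where "A = insert x0 (range xs)"
  have "compact A" unfolding A_def using xs by (rule compact_sequence_with_limit)
  then have "uniformly_continuous_on (A \<times> K) (\<lambda>z. f (fst z) (snd z))"
    using cont K by (intro compact_uniformly_continuous compact_Times)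
      (auto intro: continuous_on_subset)
  then obtain d where d: "d > 0"
    and close: "\<And>x x'. x \<in> A \<times> K \<Longrightarrow> x' \<in> A \<times> K \<Longrightarrow> dist x' x < d \<Longrightarrow>
               dist (f (fst x') (snd x')) (f (fst x) (snd x)) < e"
    unfolding uniformly_continuous_on_def using e by metis
  have "\<forall>\<^sub>F n in sequentially. dist (xs n) x0 < d"
    using xs d by (rule tendstoD)
  then show "\<forall>\<^sub>F n in sequentially. \<forall>w\<in>K. dist (f (xs n) w) (f x0 w) < e"
  proof (rule eventually_mono)
    fix n assume "dist (xs n) x0 < d"
    then show "\<forall>w\<in>K. dist (f (xs n) w) (f x0 w) < e"
      using close[of "(x0, _)" "(xs n, _)"] by (auto simp: A_def dist_Pair_Pair)
  qed
qed

lemma bidisk_zero_free_slice_dichotomy: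
  fixes f :: "complex \<Rightarrow> complex \<Rightarrow> complex"
  assumes cont: "continuous_on UNIV (\<lambda>z. f (fst z) (snd z))"
    and holo: "\<And>x. f x holomorphic_on ball 0 1"
    and zero_free: "\<And>x w. norm x < 1 \<Longrightarrow> norm w < 1 \<Longrightarrow> f x w \<noteq> 0"
    and x0: "norm x0 \<le> 1"
  shows "(\<forall>w\<in>ball 0 1. f x0 w \<noteq> 0) \<or> (\<forall>w\<in>ball 0 1. f x0 w = 0)"
proof (cases "f x0 constant_on ball 0 1")
  case True
  then show ?thesis unfolding constant_on_def by auto
next
  case False
  define xs where "xs n = of_nat n / of_nat (Suc n) * x0" for n
  have "xs \<longlonglongrightarrow> 1 * x0"
    unfolding xs_def by (intro tendsto_mult LIMSEQ_n_over_Suc_n tendsto_const)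
  then have lim: "uniform_limit K (\<lambda>n. f (xs n)) (f x0) sequentially" if "compact K" for K
    using uniform_limit_slices[OF cont that] by simp
  have xs_in_disk: "norm (xs n) < 1" for n
  proof -
    have "norm (xs n) = real n / real (Suc n) * norm x0"
      by (simp add: xs_def norm_mult norm_divide del: of_nat_Suc)
    also have "\<dots> \<le> real n / real (Suc n)" using x0 by (intro mult_left_le) auto
    also have "\<dots> < 1" by simp
    finally show ?thesis .
  qed
  have "f x0 w \<noteq> 0" if "w \<in> ball 0 1" for w
  proof (rule Hurwitz_no_zeros[of "ball 0 1" "\<lambda>n. f (xs n)" "f x0" w])
    show "uniform_limit K (\<lambda>n. f (xs n)) (f x0) sequentially" if "compact K" for K
      using that by (rule lim)
    show "f (xs n) w \<noteq> 0" if "w \<in> ball 0 1" for n w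
      using that zero_free xs_in_disk by simp
  qed (use holo False that in auto)
  then show ?thesis by blast
qed

lemma semi_stable_zero_free: "semi_stable p \<Longrightarrow> norm a < 1 \<Longrightarrow> norm b < 1 \<Longrightarrow> eval2 p a b \<noteq> 0"
  unfolding semi_stable_def by blast

lemma semi_stable_not_unit_dvd:
  "semi_stable p \<Longrightarrow> d dvd p \<Longrightarrow> d dvd ptilde p \<Longrightarrow> is_unit d"
  unfolding semi_stable_def by blast

lemma inverse_cnj_circle: "norm z = 1 \<Longrightarrow> 1 / cnj z = z"
  by (subst complex_div_cnj) simp

lemma semi_stable_nonzero_circle_disk:
  assumes ss: "semi_stable p" and z0: "norm z0 = 1" and w0: "norm w0 < 1"
  shows "eval2 p z0 w0 \<noteq> 0"
proof
  assume zero: "eval2 p z0 w0 = 0"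
  have "continuous_on UNIV (\<lambda>x. eval2 p (fst x) (snd x))"
    by (intro continuous_intros)
  then have "\<forall>w\<in>ball 0 1. eval2 p z0 w = 0"
    using bidisk_zero_free_slice_dichotomy[of "eval2 p" z0] zero w0 z0
    by (auto simp: holomorphic_on_eval2_right semi_stable_zero_free[OF ss])
  then have p_slice: "map_poly (\<lambda>c. poly c z0) p = 0"
    by (intro poly_eq_0_if_zero_on_open[of "ball 0 1"]) (auto simp: eval2_def)
  have p_zero: "eval2 p z0 w = 0" for w
    by (simp add: eval2_def p_slice)
  have "eval2 (ptilde p) z0 w = 0" if "w \<noteq> 0" for w
  proof -
    have "z0 \<noteq> 0" using z0 by auto
    then show ?thesis
      using that by (simp add: eval2_ptilde_eq_0_iff inverse_cnj_circle[OF z0] p_zero)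
  qed
  then have pt_slice: "map_poly (\<lambda>c. poly c z0) (ptilde p) = 0"
    by (intro poly_eq_0_if_zero_on_open[of "- {0}"]) (auto simp: eval2_def)
  have "[:[:-z0, 1:]:] dvd f" if "map_poly (\<lambda>c. poly c z0) f = 0" for f
  proof -
    have "poly (coeff f j) z0 = 0" for j
      using arg_cong[OF that, of "\<lambda>q. coeff q j"] by (simp add: coeff_map_poly)
    then show ?thesis by (simp add: const_poly_dvd_iff poly_eq_0_iff_dvd)
  qed
  then have "is_unit [:[:-z0, 1:]:]"
    using semi_stable_not_unit_dvd[OF ss] p_slice pt_slice by blast
  then show False by (simp add: is_unit_const_poly_iff is_unit_poly_iff)
qed

lemma semi_stable_nonzero_disk_circle:
  assumes ss: "semi_stable p" and z0: "norm z0 < 1" and w0: "norm w0 = 1"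
  shows "eval2 p z0 w0 \<noteq> 0"
proof
  assume zero: "eval2 p z0 w0 = 0"
  have "continuous_on UNIV (\<lambda>x. eval2 p (snd x) (fst x))"
    by (intro continuous_intros)
  then have "\<forall>z\<in>ball 0 1. eval2 p z w0 = 0"
    using bidisk_zero_free_slice_dichotomy[of "\<lambda>w z. eval2 p z w" w0] zero w0 z0
    by (auto simp: holomorphic_on_eval2_left semi_stable_zero_free[OF ss])
  then have p_slice: "poly p [:w0:] = 0"
    by (intro poly_eq_0_if_zero_on_open[of "ball 0 1"]) (auto simp: eval2_eq_poly_poly_const)
  have p_zero: "eval2 p z w0 = 0" for z
    by (simp add: eval2_eq_poly_poly_const p_slice)
  have "eval2 (ptilde p) z w0 = 0" if "z \<noteq> 0" for z
  proof -
    have "w0 \<noteq> 0" using w0 by auto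
    then show ?thesis
      using that by (simp add: eval2_ptilde_eq_0_iff inverse_cnj_circle[OF w0] p_zero)
  qed
  then have pt_slice: "poly (ptilde p) [:w0:] = 0"
    by (intro poly_eq_0_if_zero_on_open[of "- {0}"]) (auto simp: eval2_eq_poly_poly_const)
  have "is_unit [:-[:w0:], 1:]"
    using semi_stable_not_unit_dvd[OF ss] p_slice pt_slice by (simp add: poly_eq_0_iff_dvd)
  then show False by (auto simp: is_unit_poly_iff)
qed

lemma semi_stable_zero_closed_bidisk:
  assumes "semi_stable p" "eval2 p a b = 0" "norm a \<le> 1" "norm b \<le> 1"
  shows "norm a = 1 \<and> norm b = 1"
proof (rule ccontr)
  assume "\<not> (norm a = 1 \<and> norm b = 1)"
  then consider "norm a < 1" "norm b < 1" | "norm a = 1" "norm b < 1" | "norm a < 1" "norm b = 1"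
    using assms(3,4) by linarith
  then show False
    using semi_stable_zero_free semi_stable_nonzero_circle_disk semi_stable_nonzero_disk_circle assms(1,2)
    by cases blast+
qed

lemma semi_stable_vanishes_at_closed_bidisk:
  assumes "semi_stable p" "vanishes_at (deg1 p) (deg2 p) p z w" "\<not> in_ext_disk z" "\<not> in_ext_disk w"
  shows "in_circle z \<and> in_circle w"
proof -
  obtain a b where ab: "z = Some a" "w = Some b" "norm a \<le> 1" "norm b \<le> 1"
    using assms(3,4) by (cases z; cases w) (auto simp: in_ext_disk_def)
  then show ?thesis
    using semi_stable_zero_closed_bidisk[OF assms(1), of a b] assms(2) by (simp add: in_circle_def)
qed

theorem lemma10p1:
  fixes p :: bipoly and z w :: ext_complex
  assumes "semi_stable p"
    and "vanishes_at (deg1 p) (deg2 p) p z w"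
    and "vanishes_at (deg1 p) (deg2 p) (ptilde p) z w"
  shows "(in_disk z \<and> in_ext_disk w) \<or> (in_circle z \<and> in_circle w) \<or>
         (in_ext_disk z \<and> in_disk w)"
proof -
  have near: "in_circle z \<and> in_circle w" if "\<not> in_ext_disk z" "\<not> in_ext_disk w"
    using semi_stable_vanishes_at_closed_bidisk[OF assms(1,2) that] .
  have "in_circle (circle_reflect z) \<and> in_circle (circle_reflect w)"
    if "\<not> in_disk z" "\<not> in_disk w"
    using semi_stable_vanishes_at_closed_bidisk[OF assms(1)] assms(3) that
    by (simp add: vanishes_at_ptilde_iff in_ext_disk_circle_reflect)
  then have far: "in_circle z \<and> in_circle w" if "\<not> in_disk z" "\<not> in_disk w"
    using that by (simp add: in_circle_circle_reflect)
  show ?thesis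
    using near far in_disk_not_in_ext_disk in_circle_iff by blast
qed

end
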